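(* $\mathrm{HS}_{\mathsf{lin}}\not\geq\mathrm{HS}_{\mathsf{st}}$ and $\mathrm{HS}_{\mathsf{lin}}\not\geq\mathrm{HS}_{\mathsf{ct}}$: there is an $\mathrm{HS}$ formula $\psi$ such that no $\mathrm{HS}$ formula $\varphi$ satisfies, for every finite Kripke structure $K$, $K\models_{\mathsf{lin}}\varphi$ iff $K\models_{\mathsf{st}}\psi$; and there is an $\mathrm{HS}$ formula $\psi'$ such that no $\mathrm{HS}$ formula $\varphi$ satisfies, for every finite Kripke structure $K$, $K\models_{\mathsf{lin}}\varphi$ iff $K\models_{\mathsf{ct}}\psi'$.
   Context: A Kripke structure over a finite set $\mathcal{AP}$ is $K=(\mathcal{AP},S,\delta,\mu,s_0)$ with states $S$, left-total $\delta\subseteq S\times S$, labelling $\mu:S\to2^{\mathcal{AP}}$, initial state $s_0$; finite if $S$ is finite. Infinite paths are infinite state sequences following $\delta$; traces are their non-empty finite prefixes; initial means starting at $s_0$. For a finite word $w=w(0)\cdots w(n)$, $\mathrm{Pref}(w)=\{w[0,i]\mid0\le i\le n-1\}$, $\mathrm{Suff}(w)=\{w[i,n]\mid1\le i\le n\}$. The computation tree $C(K)$ has as states the initial traces of $K$, initial state $s_0$, labelling $\rho\mapsto\mu(\text{last state of }\rho)$, transitions $(\rho,\rho\cdot s)$. $\mathrm{HS}$ formulas: $\psi::=p\mid\neg\psi\mid\psi\wedge\psi\mid\langle X\rangle\psi$ for the Allen relations $A,L,B,E,D,O$ and inverses; all definable (non-strict semantics) from $\langle B\rangle,\langle E\rangle,\langle\bar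 B\rangle,\langle\bar E\rangle$. State-based semantics over traces: $\rho\models p$ iff $p\in\mu(s)$ for every state $s$ of $\rho$; $\langle B\rangle\psi$: some $\rho'\in\mathrm{Pref}(\rho)$ satisfies $\psi$; $\langle E\rangle\psi$: some $\rho'\in\mathrm{Suff}(\rho)$; $\langle\bar B\rangle\psi$: some trace $\rho'$ with $\rho\in\mathrm{Pref}(\rho')$; $\langle\bar E\rangle\psi$: some trace $\rho'$ with $\rho\in\mathrm{Suff}(\rho')$. $K\models_{\mathsf{st}}\psi$ iff every initial trace satisfies $\psi$; $K\models_{\mathsf{ct}}\psi$ iff $C(K)\models_{\mathsf{st}}\psi$. Trace-based: for an infinite path $\pi$, intervals $[i,j]$, $0\le i\le j$; $[i,j]\models p$ iff $p\in\mu(\pi(h))$ for all $i\le h\le j$; $[x,y]\models\langle B\rangle\psi$ iff $[x,z]\models\psi$ for some $x\le z<y$; $\langle E\rangle$: $[v,y]$ for some $x<v\le y$; $\langle\bar B\rangle$: $[x,z]$ for some $z>y$; $\langle\bar E\rangle$: $[v,y]$ for some $v<x$. $K\models_{\mathsf{lin}}\psi$ iff for every initial infinite path $\pi$ and $i\ge0$, $[0,i]\models\psi$ in $\pi$. *)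

theory Defs
  imports Main
begin

record ('p, 's) kripke =
  AP :: "'p set"
  states :: "'s set"
  trans :: "('s \<times> 's) set"
  lab :: "'s \<Rightarrow> 'p set"
  init :: 's

definition is_kripke :: "('p, 's) kripke \<Rightarrow> bool" where
  "is_kripke K \<longleftrightarrow> finite (AP K) \<and> trans K \<subseteq> states K \<times> states K
     \<and> (\<forall>s\<in>states K. \<exists>t. (s, t) \<in> trans K)
     \<and> (\<forall>s\<in>states K. lab K s \<subseteq> AP K) \<and> init K \<in> states K"

definition finite_kripke :: "('p, 's) kripke \<Rightarrow> bool" where
  "finite_kripke K \<longleftrightarrow> is_kripke K \<and> finite (states K)"

definition is_trace :: "('p, 's) kripke \<Rightarrow> 's list \<Rightarrow> bool" where
  "is_trace K \<rho> \<longleftrightarrow> \<rho> \<noteq> [] \<and> set \<rho> \<subseteq> states K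
     \<and> (\<forall>i. Suc i < length \<rho> \<longrightarrow> (\<rho> ! i, \<rho> ! Suc i) \<in> trans K)"

definition is_init_trace :: "('p, 's) kripke \<Rightarrow> 's list \<Rightarrow> bool" where
  "is_init_trace K \<rho> \<longleftrightarrow> is_trace K \<rho> \<and> hd \<rho> = init K"

definition is_path :: "('p, 's) kripke \<Rightarrow> (nat \<Rightarrow> 's) \<Rightarrow> bool" where
  "is_path K \<pi> \<longleftrightarrow> (\<forall>i. \<pi> i \<in> states K \<and> (\<pi> i, \<pi> (Suc i)) \<in> trans K)"

definition is_init_path :: "('p, 's) kripke \<Rightarrow> (nat \<Rightarrow> 's) \<Rightarrow> bool" where
  "is_init_path K \<pi> \<longleftrightarrow> is_path K \<pi> \<and> \<pi> 0 = init K"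

definition comp_tree :: "('p, 's) kripke \<Rightarrow> ('p, 's list) kripke" where
  "comp_tree K = \<lparr> AP = AP K,
     states = {\<rho>. is_init_trace K \<rho>},
     trans = {(\<rho>, \<rho> @ [s]) | \<rho> s. is_init_trace K \<rho> \<and> (last \<rho>, s) \<in> trans K},
     lab = (\<lambda>\<rho>. lab K (last \<rho>)),
     init = [init K] \<rparr>"

datatype 'p hs =
    Prop 'p
  | Neg "'p hs"
  | And "'p hs" "'p hs"
  | DiaB "'p hs"
  | DiaE "'p hs"
  | DiaBt "'p hs"
  | DiaEt "'p hs"

definition Or :: "'p hs \<Rightarrow> 'p hs \<Rightarrow> 'p hs" where
  "Or \<phi> \<psi> = Neg (And (Neg \<phi>) (Neg \<psi>))"

text \<open>Derived Allen modalities (non-strict semantics).\<close>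
definition DiaA :: "'p hs \<Rightarrow> 'p hs" where "DiaA \<phi> = DiaEt (DiaBt \<phi>) "
definition DiaD :: "'p hs \<Rightarrow> 'p hs" where "DiaD \<phi> = DiaB (DiaE \<phi>)"
definition DiaDt :: "'p hs \<Rightarrow> 'p hs" where "DiaDt \<phi> = DiaBt (DiaEt \<phi>)"

fun sat_st :: "('p, 's) kripke \<Rightarrow> 's list \<Rightarrow> 'p hs \<Rightarrow> bool" where
  "sat_st K \<rho> (Prop p) \<longleftrightarrow> (\<forall>s\<in>set \<rho>. p \<in> lab K s)"
| "sat_st K \<rho> (Neg \<phi>) \<longleftrightarrow> \<not> sat_st K \<rho> \<phi>"
| "sat_st K \<rho> (And \<phi> \<psi>) \<longleftrightarrow> sat_st K \<rho> \<phi> \<and> sat_st K \<rho> \<psi>"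
| "sat_st K \<rho> (DiaB \<phi>) \<longleftrightarrow> (\<exists>k. 1 \<le> k \<and> k < length \<rho> \<and> sat_st K (take k \<rho>) \<phi>)"
| "sat_st K \<rho> (DiaE \<phi>) \<longleftrightarrow> (\<exists>k. 1 \<le> k \<and> k < length \<rho> \<and> sat_st K (drop k \<rho>) \<phi>)"
| "sat_st K \<rho> (DiaBt \<phi>) \<longleftrightarrow> (\<exists>\<sigma>. \<sigma> \<noteq> [] \<and> is_trace K (\<rho> @ \<sigma>) \<and> sat_st K (\<rho> @ \<sigma>) \<phi>)"
| "sat_st K \<rho> (DiaEt \<phi>) \<longleftrightarrow> (\<exists>\<sigma>. \<sigma> \<noteq> [] \<and> is_trace K (\<sigma> @ \<rho>) \<and> sat_st K (\<sigma> @ \<rho>) \<phi>)"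

definition models_st :: "('p, 's) kripke \<Rightarrow> 'p hs \<Rightarrow> bool" where
  "models_st K \<psi> \<longleftrightarrow> (\<forall>\<rho>. is_init_trace K \<rho> \<longrightarrow> sat_st K \<rho> \<psi>)"

definition models_ct :: "('p, 's) kripke \<Rightarrow> 'p hs \<Rightarrow> bool" where
  "models_ct K \<psi> \<longleftrightarrow> models_st (comp_tree K) \<psi>"

fun sat_lin :: "('p, 's) kripke \<Rightarrow> (nat \<Rightarrow> 's) \<Rightarrow> nat \<Rightarrow> nat \<Rightarrow> 'p hs \<Rightarrow> bool" where
  "sat_lin K \<pi> x y (Prop p) \<longleftrightarrow> (\<forall>h. x \<le> h \<and> h \<le> y \<longrightarrow> p \<in> lab K (\<pi> h))"
| "sat_lin K \<pi> x y (Neg \<phi>) \<longleftrightarrow> \<not> sat_lin K \<pi> x y \<phi>"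
| "sat_lin K \<pi> x y (And \<phi> \<psi>) \<longleftrightarrow> sat_lin K \<pi> x y \<phi> \<and> sat_lin K \<pi> x y \<psi>"
| "sat_lin K \<pi> x y (DiaB \<phi>) \<longleftrightarrow> (\<exists>z. x \<le> z \<and> z < y \<and> sat_lin K \<pi> x z \<phi>)"
| "sat_lin K \<pi> x y (DiaE \<phi>) \<longleftrightarrow> (\<exists>v. x < v \<and> v \<le> y \<and> sat_lin K \<pi> v y \<phi>)"
| "sat_lin K \<pi> x y (DiaBt \<phi>) \<longleftrightarrow> (\<exists>z. y < z \<and> sat_lin K \<pi> x z \<phi>)"
| "sat_lin K \<pi> x y (DiaEt \<phi>) \<longleftrightarrow> (\<exists>v. v < x \<and> sat_lin K \<pi> v y \<phi>)"

definition models_lin :: "('p, 's) kripke \<Rightarrow> 'p hs \<Rightarrow> bool" where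
  "models_lin K \<phi> \<longleftrightarrow> (\<forall>\<pi> i. is_init_path K \<pi> \<longrightarrow> sat_lin K \<pi> 0 i \<phi>)"

end

theory Submission
  imports Defs
begin

text \<open>The linear semantics only sees the sequences of labels along initial infinite paths.
  For the state-based semantics, take the loop 0 \<rightarrow> 0 and add a state labelled p with an edge
  into 0 that is unreachable from 0: the paths are unchanged, but \<open>\<langle>Ebar\<rangle>\<langle>B\<rangle>p\<close> now holds,
  since \<open>\<langle>Ebar\<rangle>\<close> may extend a trace into the past. For the computation-tree semantics, take
  two structures with the same path labellings \<open>\<emptyset> \<emptyset> p\<^sup>\<omega>\<close> and \<open>\<emptyset> \<emptyset> q\<^sup>\<omega>\<close>, one branching at the
  first step and one at the second: only in the latter can a trace of length two still be
  continued both to a p-suffix and to a q-suffix.\<close>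

lemma sat_lin_cong:
  assumes "\<And>h. lab K (\<pi> h) = lab K' (\<pi>' h)"
  shows "sat_lin K \<pi> x y \<phi> \<longleftrightarrow> sat_lin K' \<pi>' x y \<phi>"
  using assms by (induction \<phi> arbitrary: x y) auto

definition init_path_labellings :: "('p, 's) kripke \<Rightarrow> (nat \<Rightarrow> 'p set) set" where
  "init_path_labellings K = {lab K \<circ> \<pi> | \<pi>. is_init_path K \<pi>}"

lemma models_lin_antimono:
  assumes "init_path_labellings K \<subseteq> init_path_labellings K'" and "models_lin K' \<phi>"
  shows "models_lin K \<phi>"
  unfolding models_lin_def
proof (intro allI impI)
  fix \<pi> i assume "is_init_path K \<pi>"
  then obtain \<pi>' where "is_init_path K' \<pi>'" and "lab K \<circ> \<pi> = lab K' \<circ> \<pi>'"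
    using assms(1) unfolding init_path_labellings_def by blast
  then show "sat_lin K \<pi> 0 i \<phi>"
    using assms(2) sat_lin_cong[of K \<pi> K' \<pi>'] unfolding models_lin_def by (metis comp_apply)
qed

lemma models_lin_cong:
  "init_path_labellings K = init_path_labellings K' \<Longrightarrow> models_lin K \<phi> \<longleftrightarrow> models_lin K' \<phi>"
  using models_lin_antimono by (metis order_refl)

lemma not_lin_definable:
  fixes K K' :: "('p, 's) kripke"
  assumes "finite_kripke K" "finite_kripke K'"
    and "init_path_labellings K = init_path_labellings K'"
    and "P K" "\<not> P K'"
  shows "\<not> (\<exists>\<phi>. \<forall>K :: ('p, 's) kripke. finite_kripke K \<longrightarrow> (models_lin K \<phi> \<longleftrightarrow> P K))"
  using assms models_lin_cong by metis

definition closed_under_trans :: "('p, 's) kripke \<Rightarrow> 's set \<Rightarrow> bool" where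
  "closed_under_trans K S \<longleftrightarrow> (\<forall>a\<in>S. \<forall>b. (a, b) \<in> trans K \<longrightarrow> b \<in> S)"

lemma trace_stays_in_closed_set:
  assumes "is_trace K \<rho>" "closed_under_trans K S" "\<rho> ! i \<in> S"
  shows "i \<le> j \<Longrightarrow> j < length \<rho> \<Longrightarrow> \<rho> ! j \<in> S"
proof (induction j)
  case 0
  then show ?case using assms(3) by simp
next
  case (Suc j)
  show ?case
  proof (cases "i = Suc j")
    case False
    then have "\<rho> ! j \<in> S" using Suc by simp
    moreover have "(\<rho> ! j, \<rho> ! Suc j) \<in> trans K"
      using assms(1) Suc.prems(2) unfolding is_trace_def by blast
    ultimately show ?thesis using assms(2) unfolding closed_under_trans_def by blast
  qed (use assms(3) in simp)
qed

lemma not_sat_DiaBt_DiaE_Prop_if_trapped: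
  assumes "i < length \<rho>" "\<rho> ! i \<in> S" "closed_under_trans K S" "\<forall>s\<in>S. q \<notin> lab K s"
  shows "\<not> sat_st K \<rho> (DiaBt (DiaE (Prop q)))"
proof
  assume "sat_st K \<rho> (DiaBt (DiaE (Prop q)))"
  then obtain \<sigma> k where tr: "is_trace K (\<rho> @ \<sigma>)" and k: "1 \<le> k" "k < length (\<rho> @ \<sigma>)"
    and suffix: "\<forall>s\<in>set (drop k (\<rho> @ \<sigma>)). q \<in> lab K s" by auto
  let ?u = "\<rho> @ \<sigma>"
  have "?u ! (length ?u - 1) \<in> S"
    using trace_stays_in_closed_set[OF tr assms(3), of i] assms(1,2) by (simp add: nth_append)
  moreover have "last ?u \<in> set (drop k ?u)"
    using k by (metis drop_eq_Nil last_drop last_in_set not_le)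
  moreover have "last ?u = ?u ! (length ?u - 1)" using k by (subst last_conv_nth) auto
  ultimately show False using suffix assms(4) by auto
qed

lemma comp_tree_trans_last:
  "(\<rho>, \<rho>') \<in> trans (comp_tree K) \<Longrightarrow> (last \<rho>, last \<rho>') \<in> trans K"
  unfolding comp_tree_def by auto

lemma closed_under_trans_comp_tree:
  "closed_under_trans K S \<Longrightarrow> closed_under_trans (comp_tree K) {\<rho>. last \<rho> \<in> S}"
  unfolding closed_under_trans_def using comp_tree_trans_last by fastforce

lemma not_sat_comp_tree_DiaBt_DiaE_Prop_if_trapped:
  assumes "i < length \<tau>" "last (\<tau> ! i) \<in> S" "closed_under_trans K S" "\<forall>s\<in>S. q \<notin> lab K s"
  shows "\<not> sat_st (comp_tree K) \<tau> (DiaBt (DiaE (Prop q)))"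
  using assms by (intro not_sat_DiaBt_DiaE_Prop_if_trapped[OF _ _ closed_under_trans_comp_tree])
    (auto simp: comp_tree_def)

definition K_loop :: "(nat, nat) kripke" where
  "K_loop = \<lparr> AP = {0}, states = {0}, trans = {(0, 0)}, lab = (\<lambda>s. {}), init = 0 \<rparr>"

definition K_past :: "(nat, nat) kripke" where
  "K_past = \<lparr> AP = {0}, states = {0, 1}, trans = {(0, 0), (1, 0)},
     lab = (\<lambda>s. if s = 1 then {0} else {}), init = 0 \<rparr>"

definition psi_past :: "nat hs" where
  "psi_past = DiaEt (DiaB (Prop 0))"

lemma finite_kripke_K_loop: "finite_kripke K_loop"
  unfolding finite_kripke_def is_kripke_def K_loop_def by auto

lemma finite_kripke_K_past: "finite_kripke K_past"
  unfolding finite_kripke_def is_kripke_def K_past_def by auto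

lemma is_init_path_K_past_iff: "is_init_path K_past \<pi> \<longleftrightarrow> \<pi> = (\<lambda>_. 0)"
proof
  assume path: "is_init_path K_past \<pi>"
  have "\<pi> h = 0" for h
  proof (induction h)
    case (Suc h)
    have "(\<pi> h, \<pi> (Suc h)) \<in> trans K_past"
      using path unfolding is_init_path_def is_path_def by blast
    then show ?case using Suc by (auto simp: K_past_def)
  qed (use path in \<open>simp add: is_init_path_def K_past_def\<close>)
  then show "\<pi> = (\<lambda>_. 0)" by blast
qed (simp add: is_init_path_def is_path_def K_past_def)

lemma is_init_path_K_loop_iff: "is_init_path K_loop \<pi> \<longleftrightarrow> \<pi> = (\<lambda>_. 0)"
  unfolding is_init_path_def is_path_def K_loop_def by auto

lemma init_path_labellings_K_past_K_loop:
  "init_path_labellings K_past = init_path_labellings K_loop"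
  unfolding init_path_labellings_def is_init_path_K_past_iff is_init_path_K_loop_iff
  by (simp add: K_past_def K_loop_def comp_def)

lemma models_st_K_past: "models_st K_past psi_past"
  unfolding models_st_def psi_past_def
proof (intro allI impI)
  fix \<rho> assume "is_init_trace K_past \<rho>"
  then have "\<rho> \<noteq> []" "hd \<rho> = 0" "is_trace K_past \<rho>"
    unfolding is_init_trace_def is_trace_def K_past_def by auto
  then have "is_trace K_past ([1] @ \<rho>)"
    unfolding is_trace_def by (auto simp: K_past_def nth_Cons hd_conv_nth split: nat.splits)
  moreover have "sat_st K_past ([1] @ \<rho>) (DiaB (Prop 0))"
    using \<open>\<rho> \<noteq> []\<close> by (auto intro!: exI[of _ 1] simp: K_past_def)
  ultimately show "sat_st K_past \<rho> (DiaEt (DiaB (Prop 0)))"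
    by (auto simp del: sat_st.simps(4) intro!: exI[of _ "[1]"])
qed

lemma not_models_st_K_loop: "\<not> models_st K_loop psi_past"
proof -
  have "is_init_trace K_loop [0]" unfolding is_init_trace_def is_trace_def K_loop_def by simp
  moreover have "\<not> sat_st K_loop [0] psi_past"
    by (auto simp: psi_past_def K_loop_def ex_in_conv)
  ultimately show ?thesis unfolding models_st_def by blast
qed

definition lab_leaves :: "nat \<Rightarrow> nat set" where
  "lab_leaves s = (if s = 3 then {0} else if s = 4 then {1} else {})"

definition K_early :: "(nat, nat) kripke" where
  "K_early = \<lparr> AP = {0, 1}, states = {0, 1, 2, 3, 4},
     trans = {(0, 1), (0, 2), (1, 3), (2, 4), (3, 3), (4, 4)}, lab = lab_leaves, init = 0 \<rparr>"

definition K_late :: "(nat, nat) kripke" where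
  "K_late = \<lparr> AP = {0, 1}, states = {0, 1, 3, 4},
     trans = {(0, 1), (1, 3), (1, 4), (3, 3), (4, 4)}, lab = lab_leaves, init = 0 \<rparr>"

definition hs_top :: "nat hs" where
  "hs_top = Neg (And (Prop 0) (Neg (Prop 0)))"

definition psi_branch :: "nat hs" where
  "psi_branch = Neg (And (DiaB hs_top) (And (DiaBt (DiaE (Prop 0))) (DiaBt (DiaE (Prop 1)))))"

lemma finite_kripke_K_early: "finite_kripke K_early"
  unfolding finite_kripke_def is_kripke_def K_early_def lab_leaves_def by auto

lemma finite_kripke_K_late: "finite_kripke K_late"
  unfolding finite_kripke_def is_kripke_def K_late_def lab_leaves_def by auto

lemma init_path_labellings_K_early_K_late:
  "init_path_labellings K_early = init_path_labellings K_late"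
proof (rule antisym; rule subsetI)
  fix w assume "w \<in> init_path_labellings K_early"
  then obtain \<pi> where path: "is_init_path K_early \<pi>" and w: "w = lab K_early \<circ> \<pi>"
    unfolding init_path_labellings_def by blast
  define \<pi>' where "\<pi>' h = (if \<pi> h = 2 then 1 else \<pi> h)" for h
  have "is_init_path K_late \<pi>'"
    unfolding is_init_path_def is_path_def
  proof (intro conjI allI)
    fix i
    have "\<pi> i \<in> states K_early" "(\<pi> i, \<pi> (Suc i)) \<in> trans K_early"
      using path unfolding is_init_path_def is_path_def by auto
    then show "\<pi>' i \<in> states K_late" "(\<pi>' i, \<pi>' (Suc i)) \<in> trans K_late"
      unfolding \<pi>'_def K_early_def K_late_def by auto
  qed (use path in \<open>simp add: \<pi>'_def is_init_path_def K_early_def K_late_def\<close>)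
  moreover have "w = lab K_late \<circ> \<pi>'"
    unfolding w \<pi>'_def K_early_def K_late_def lab_leaves_def by (auto simp: fun_eq_iff)
  ultimately show "w \<in> init_path_labellings K_late"
    unfolding init_path_labellings_def by blast
next
  fix w assume "w \<in> init_path_labellings K_late"
  then obtain \<pi> where path: "is_init_path K_late \<pi>" and w: "w = lab K_late \<circ> \<pi>"
    unfolding init_path_labellings_def by blast
  define \<pi>' where "\<pi>' h = (if \<pi> h = 1 \<and> \<pi> (Suc h) = 4 then 2 else \<pi> h)" for h
  have "is_init_path K_early \<pi>'"
    unfolding is_init_path_def is_path_def
  proof (intro conjI allI)
    fix i
    have "(\<pi> i, \<pi> (Suc i)) \<in> trans K_late" "(\<pi> (Suc i), \<pi> (Suc (Suc i))) \<in> trans K_late"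
      using path unfolding is_init_path_def is_path_def by auto
    then show "\<pi>' i \<in> states K_early" "(\<pi>' i, \<pi>' (Suc i)) \<in> trans K_early"
      unfolding \<pi>'_def K_early_def K_late_def by auto
  qed (use path in \<open>simp add: \<pi>'_def is_init_path_def K_early_def K_late_def\<close>)
  moreover have "w = lab K_early \<circ> \<pi>'"
    unfolding w \<pi>'_def K_early_def K_late_def lab_leaves_def by (auto simp: fun_eq_iff)
  ultimately show "w \<in> init_path_labellings K_early"
    unfolding init_path_labellings_def by blast
qed

lemma models_ct_K_early: "models_ct K_early psi_branch"
  unfolding models_ct_def models_st_def
proof (intro allI impI)
  fix \<tau> assume init_trace: "is_init_trace (comp_tree K_early) \<tau>"
  show "sat_st (comp_tree K_early) \<tau> psi_branch"
  proof (cases "2 \<le> length \<tau>")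
    case False
    then show ?thesis unfolding psi_branch_def by auto
  next
    case True
    have "\<tau> ! 0 = [0]"
      using init_trace True by (cases \<tau>) (auto simp: is_init_trace_def comp_tree_def K_early_def)
    moreover have "(\<tau> ! 0, \<tau> ! 1) \<in> trans (comp_tree K_early)"
      using init_trace True unfolding is_init_trace_def is_trace_def by auto
    ultimately have "last (\<tau> ! 1) \<in> {1, 2}"
      using comp_tree_trans_last by (fastforce simp: K_early_def)
    then consider "last (\<tau> ! 1) \<in> {1, 3}" | "last (\<tau> ! 1) \<in> {2, 4}" by blast
    then show ?thesis
    proof cases
      case 1
      have "closed_under_trans K_early {1, 3}"
        unfolding closed_under_trans_def K_early_def by auto
      then have "\<not> sat_st (comp_tree K_early) \<tau> (DiaBt (DiaE (Prop 1)))"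
        using 1 True by (intro not_sat_comp_tree_DiaBt_DiaE_Prop_if_trapped[of 1])
          (auto simp: K_early_def lab_leaves_def)
      then show ?thesis unfolding psi_branch_def by auto
    next
      case 2
      have "closed_under_trans K_early {2, 4}"
        unfolding closed_under_trans_def K_early_def by auto
      then have "\<not> sat_st (comp_tree K_early) \<tau> (DiaBt (DiaE (Prop 0)))"
        using 2 True by (intro not_sat_comp_tree_DiaBt_DiaE_Prop_if_trapped[of 1])
          (auto simp: K_early_def lab_leaves_def)
      then show ?thesis unfolding psi_branch_def by auto
    qed
  qed
qed

lemma not_models_ct_K_late: "\<not> models_ct K_late psi_branch"
proof -
  let ?C = "comp_tree K_late"
  have traces: "is_init_trace K_late [0]" "is_init_trace K_late [0, 1]"
    "is_init_trace K_late [0, 1, 3]" "is_init_trace K_late [0, 1, 4]"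
    unfolding is_init_trace_def is_trace_def K_late_def
    by (auto simp: less_Suc_eq nth_Cons split: nat.splits)
  then have edges: "([0], [0, 1]) \<in> trans ?C"
    "([0, 1], [0, 1, 3]) \<in> trans ?C" "([0, 1], [0, 1, 4]) \<in> trans ?C"
    unfolding comp_tree_def by (auto simp: K_late_def)
  have "is_init_trace ?C [[0], [0, 1]]"
    using traces edges by (auto simp: is_init_trace_def is_trace_def less_Suc_eq comp_tree_def)
  moreover have "sat_st ?C [[0], [0, 1]] (DiaB hs_top)"
    by (auto intro!: exI[of _ 1] simp: hs_top_def)
  moreover have "sat_st ?C [[0], [0, 1]] (DiaBt (DiaE (Prop q)))" if "q \<in> {0, 1}" for q
  proof -
    have "is_trace ?C ([[0], [0, 1]] @ [[0, 1, q + 3]])"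
      using that traces edges
      by (auto simp: is_trace_def less_Suc_eq nth_Cons comp_tree_def split: nat.splits)
    moreover have "sat_st ?C ([[0], [0, 1]] @ [[0, 1, q + 3]]) (DiaE (Prop q))"
      using that by (auto intro!: exI[of _ 2] simp: comp_tree_def K_late_def lab_leaves_def)
    ultimately show ?thesis by (auto simp del: sat_st.simps(5))
  qed
  ultimately show ?thesis
    unfolding models_ct_def models_st_def psi_branch_def by (metis insertCI sat_st.simps(2,3))
qed

theorem proposition5p3:
  shows "(\<exists>\<psi> :: nat hs. \<not> (\<exists>\<phi>. \<forall>K :: (nat, nat) kripke.
            finite_kripke K \<longrightarrow> (models_lin K \<phi> \<longleftrightarrow> models_st K \<psi>)))
       \<and> (\<exists>\<psi>' :: nat hs. \<not> (\<exists>\<phi>. \<forall>K :: (nat, nat) kripke.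
            finite_kripke K \<longrightarrow> (models_lin K \<phi> \<longleftrightarrow> models_ct K \<psi>')))"
proof (intro conjI exI)
  show "\<not> (\<exists>\<phi>. \<forall>K :: (nat, nat) kripke.
            finite_kripke K \<longrightarrow> (models_lin K \<phi> \<longleftrightarrow> models_st K psi_past))"
    by (rule not_lin_definable[OF finite_kripke_K_past finite_kripke_K_loop
          init_path_labellings_K_past_K_loop models_st_K_past not_models_st_K_loop])
  show "\<not> (\<exists>\<phi>. \<forall>K :: (nat, nat) kripke.
            finite_kripke K \<longrightarrow> (models_lin K \<phi> \<longleftrightarrow> models_ct K psi_branch))"
    by (rule not_lin_definable[OF finite_kripke_K_early finite_kripke_K_late
          init_path_labellings_K_early_K_late models_ct_K_early not_models_ct_K_late])
qed

end
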